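(* Let $d\ge1$, let $\preceq$ be a term order and let $J\subset S$ be a saturated Borel ideal which is a hilb-segment ideal w.r.t. $\preceq$ with Hilbert polynomial $p_{S/J}(z)=d$. Let $\mathcal B=\{x^\beta\in\mathbb T_d\setminus J : x_1x^\beta\in J\}$. Then $ed(\mathcal St_h(J,\preceq))\ge |G(J)|\cdot|\mathcal B|$.
   Context: $S=K[x_0,\dots,x_n]$, $K$ algebraically closed of characteristic $0$, standard grading, $x_0<x_1<\dots<x_n$; $\mathbb T_t$ is the set of terms of degree $t$; $G(J)$ is the set of minimal monomial generators of $J$. A monomial ideal is Borel if $x^\alpha\in J$, $\alpha_j>0$, $j<n$ imply $x^\alpha x_{j+1}/x_j\in J$. Given a term order, $B\subseteq\mathbb T_t$ is a segment if $\tau\in B$, $\tau'\in\mathbb T_t$, $\tau'\succ\tau$ imply $\tau'\in B$; a saturated Borel ideal with constant Hilbert polynomial $d$ is a hilb-segment ideal if $J\cap\mathbb T_d$ is a segment ($d$ being the Gotzmann number of the constant polynomial $d$). Homogeneous Gröbner stratum: $\mathcal St_h(J,\preceq)$ is the affine scheme parametrizing homogeneous ideals of $S$ whose initial ideal w.r.t. $\preceq$ is $J_{\ge d}$; explicitly, for each minimal generator $x^\alpha$ of $J_{\ge d}$ of degree $t$ one sets $F_\alpha=x^\alpha+\sum c_{\alpha\beta}x^\beta$, the sum over terms $x^\beta\in\mathbb T_t\setminus J$ with $x^\beta\prec x^\alpha$, with new variables $c_{\alpha\beta}$; the defining ideal in $K[c_{\alpha\beta}]$ is generated by the $x$-coefficients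 of the reductions of all $S$-polynomials $S(F_\alpha,F_{\alpha'})$ modulo $\{F_\alpha\}$. The point $J$ is the origin, and $ed(\mathcal St_h(J,\preceq))$ denotes the embedding dimension, i.e. the dimension of the Zariski tangent space of the stratum at the origin. *)

theory Defs
  imports "HOL-Library.Poly_Mapping" "HOL-Computational_Algebra.Polynomial"
begin

text \<open>Terms x^alpha of S = K[x_0,...,x_n] are exponent vectors alpha :: nat =>0 nat
  with support in {0..n}.  Polynomials with coefficients in a commutative ring R
  are finitely supported maps from terms to R (convolution product of Poly_Mapping).\<close>

type_synonym monom = "nat \<Rightarrow>\<^sub>0 nat"
type_synonym 'r xpoly = "monom \<Rightarrow>\<^sub>0 'r"

definition alg_closed_field :: "'a::field itself \<Rightarrow> bool" where
  "alg_closed_field _ \<longleftrightarrow> (\<forall>p :: 'a poly. degree p > 0 \<longrightarrow> (\<exists>x. poly p x = 0))"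

definition is_term :: "nat \<Rightarrow> monom \<Rightarrow> bool" where
  "is_term n a \<longleftrightarrow> Poly_Mapping.keys a \<subseteq> {..n}"

definition tdeg :: "monom \<Rightarrow> nat" where
  "tdeg a = (\<Sum>i\<in>Poly_Mapping.keys a. Poly_Mapping.lookup a i)"

definition terms_deg :: "nat \<Rightarrow> nat \<Rightarrow> monom set" where
  "terms_deg n t = {a. is_term n a \<and> tdeg a = t}"

definition tdvd :: "monom \<Rightarrow> monom \<Rightarrow> bool" where
  "tdvd a b \<longleftrightarrow> (\<exists>c. b = a + c)"

definition xvar :: "nat \<Rightarrow> monom" where
  "xvar i = Poly_Mapping.single i 1"

text \<open>A monomial ideal is identified with the set of terms it contains.\<close>
definition monomial_ideal :: "nat \<Rightarrow> monom set \<Rightarrow> bool" where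
  "monomial_ideal n J \<longleftrightarrow> (\<forall>a\<in>J. is_term n a) \<and>
      (\<forall>a\<in>J. \<forall>b. is_term n b \<longrightarrow> a + b \<in> J)"

definition mingens :: "monom set \<Rightarrow> monom set" where
  "mingens J = {a\<in>J. \<forall>b\<in>J. tdvd b a \<longrightarrow> b = a}"

definition borel :: "nat \<Rightarrow> monom set \<Rightarrow> bool" where
  "borel n J \<longleftrightarrow> (\<forall>a\<in>J. \<forall>j<n. Poly_Mapping.lookup a j > 0 \<longrightarrow>
      a - xvar j + xvar (Suc j) \<in> J)"

text \<open>Saturation with respect to the irrelevant ideal m = (x_0,...,x_n): J = J : m^infinity.\<close>
definition saturated :: "nat \<Rightarrow> monom set \<Rightarrow> bool" where
  "saturated n J \<longleftrightarrow> (\<forall>a. is_term n a \<longrightarrow>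
      (\<exists>k. \<forall>b\<in>terms_deg n k. a + b \<in> J) \<longrightarrow> a \<in> J)"

definition hilb_fun :: "nat \<Rightarrow> monom set \<Rightarrow> nat \<Rightarrow> nat" where
  "hilb_fun n J t = card (terms_deg n t - J)"

definition hilb_poly_const :: "nat \<Rightarrow> monom set \<Rightarrow> nat \<Rightarrow> bool" where
  "hilb_poly_const n J d \<longleftrightarrow> (\<exists>t0. \<forall>t\<ge>t0. hilb_fun n J t = d)"

definition monomorder :: "nat \<Rightarrow> (monom \<Rightarrow> monom \<Rightarrow> bool) \<Rightarrow> bool" where
  "monomorder n le \<longleftrightarrow>
     (\<forall>a. is_term n a \<longrightarrow> le a a) \<and>
     (\<forall>a b. is_term n a \<longrightarrow> is_term n b \<longrightarrow> le a b \<longrightarrow> le b a \<longrightarrow> a = b) \<and>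
     (\<forall>a b c. is_term n a \<longrightarrow> is_term n b \<longrightarrow> is_term n c \<longrightarrow> le a b \<longrightarrow> le b c \<longrightarrow> le a c) \<and>
     (\<forall>a b. is_term n a \<longrightarrow> is_term n b \<longrightarrow> le a b \<or> le b a) \<and>
     (\<forall>a. is_term n a \<longrightarrow> le 0 a) \<and>
     (\<forall>a b c. is_term n a \<longrightarrow> is_term n b \<longrightarrow> is_term n c \<longrightarrow> le a b \<longrightarrow> le (a + c) (b + c)) \<and>
     (\<forall>i<n. le (xvar i) (xvar (Suc i)) \<and> xvar i \<noteq> xvar (Suc i))"

definition tless :: "(monom \<Rightarrow> monom \<Rightarrow> bool) \<Rightarrow> monom \<Rightarrow> monom \<Rightarrow> bool" where
  "tless le a b \<longleftrightarrow> le a b \<and> a \<noteq> b"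

definition segment :: "nat \<Rightarrow> (monom \<Rightarrow> monom \<Rightarrow> bool) \<Rightarrow> nat \<Rightarrow> monom set \<Rightarrow> bool" where
  "segment n le t B \<longleftrightarrow> B \<subseteq> terms_deg n t \<and>
     (\<forall>a\<in>B. \<forall>b\<in>terms_deg n t. tless le a b \<longrightarrow> b \<in> B)"

definition hilb_segment :: "nat \<Rightarrow> (monom \<Rightarrow> monom \<Rightarrow> bool) \<Rightarrow> monom set \<Rightarrow> nat \<Rightarrow> bool" where
  "hilb_segment n le J d \<longleftrightarrow> monomial_ideal n J \<and> saturated n J \<and> borel n J \<and>
     hilb_poly_const n J d \<and> segment n le d (J \<inter> terms_deg n d)"

text \<open>Parameters c_{alpha beta} are indexed by pairs (alpha, beta) of terms;
  the coordinate ring is K[c] = 'a cpoly.\<close>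
type_synonym 'a cpoly = "((monom \<times> monom) \<Rightarrow>\<^sub>0 nat) \<Rightarrow>\<^sub>0 'a"

definition cvar :: "monom \<times> monom \<Rightarrow> 'a::comm_ring_1 cpoly" where
  "cvar v = Poly_Mapping.single (Poly_Mapping.single v 1) 1"

definition trunc_ideal :: "monom set \<Rightarrow> nat \<Rightarrow> monom set" where
  "trunc_ideal J d = {a\<in>J. tdeg a \<ge> d}"

definition tail_terms :: "nat \<Rightarrow> (monom \<Rightarrow> monom \<Rightarrow> bool) \<Rightarrow> monom set \<Rightarrow> monom \<Rightarrow> monom set" where
  "tail_terms n le J a = {b\<in>terms_deg n (tdeg a). b \<notin> J \<and> tless le b a}"

definition stratum_vars :: "nat \<Rightarrow> (monom \<Rightarrow> monom \<Rightarrow> bool) \<Rightarrow> monom set \<Rightarrow> nat \<Rightarrow> (monom \<times> monom) set" where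
  "stratum_vars n le J d = {(a, b). a \<in> mingens (trunc_ideal J d) \<and> b \<in> tail_terms n le J a}"

definition Fpoly :: "nat \<Rightarrow> (monom \<Rightarrow> monom \<Rightarrow> bool) \<Rightarrow> monom set \<Rightarrow> monom \<Rightarrow> 'a::comm_ring_1 cpoly xpoly" where
  "Fpoly n le J a = Poly_Mapping.single a 1 +
     (\<Sum>b\<in>tail_terms n le J a. Poly_Mapping.single b (cvar (a, b)))"

text \<open>Here a + (a' - a) is the lcm of the terms (pointwise max of exponents).\<close>

definition Spoly :: "nat \<Rightarrow> (monom \<Rightarrow> monom \<Rightarrow> bool) \<Rightarrow> monom set \<Rightarrow> monom \<Rightarrow> monom \<Rightarrow> 'a::comm_ring_1 cpoly xpoly" where
  "Spoly n le J a a' =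
     (let l = a + (a' - a) in
       Poly_Mapping.single (l - a) 1 * Fpoly n le J a - Poly_Mapping.single (l - a') 1 * Fpoly n le J a')"

definition red_step :: "nat \<Rightarrow> (monom \<Rightarrow> monom \<Rightarrow> bool) \<Rightarrow> monom set \<Rightarrow> nat \<Rightarrow>
    'a::comm_ring_1 cpoly xpoly \<Rightarrow> 'a cpoly xpoly \<Rightarrow> bool" where
  "red_step n le J d g h \<longleftrightarrow> (\<exists>a\<in>mingens (trunc_ideal J d). \<exists>c. c + a \<in> Poly_Mapping.keys g \<and>
      h = g - Poly_Mapping.single c (Poly_Mapping.lookup g (c + a)) * Fpoly n le J a)"

definition is_reduction :: "nat \<Rightarrow> (monom \<Rightarrow> monom \<Rightarrow> bool) \<Rightarrow> monom set \<Rightarrow> nat \<Rightarrow>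
    'a::comm_ring_1 cpoly xpoly \<Rightarrow> 'a cpoly xpoly \<Rightarrow> bool" where
  "is_reduction n le J d g r \<longleftrightarrow> (red_step n le J d)\<^sup>*\<^sup>* g r \<and>
     (\<forall>t\<in>Poly_Mapping.keys r. \<forall>a\<in>mingens (trunc_ideal J d). \<not> tdvd a t)"

text \<open>Generators of the defining ideal: the x-coefficients of all reductions of all S-polynomials
  (all possible reductions are admitted).\<close>
definition stratum_gens :: "nat \<Rightarrow> (monom \<Rightarrow> monom \<Rightarrow> bool) \<Rightarrow> monom set \<Rightarrow> nat \<Rightarrow> 'a::comm_ring_1 cpoly set" where
  "stratum_gens n le J d = {Poly_Mapping.lookup r t | r t a a'.
      a \<in> mingens (trunc_ideal J d) \<and> a' \<in> mingens (trunc_ideal J d) \<and>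
      is_reduction n le J d (Spoly n le J a a') r}"

inductive_set ideal_gen :: "'r::comm_ring_1 set \<Rightarrow> 'r set" for G where
  base: "g \<in> G \<Longrightarrow> g \<in> ideal_gen G"
| zero: "0 \<in> ideal_gen G"
| add: "f \<in> ideal_gen G \<Longrightarrow> g \<in> ideal_gen G \<Longrightarrow> f + g \<in> ideal_gen G"
| mult: "f \<in> ideal_gen G \<Longrightarrow> h * f \<in> ideal_gen G"

text \<open>Linear part of f in K[c] evaluated on a tangent vector w (differential at the origin).\<close>
definition lin_part :: "(monom \<times> monom) set \<Rightarrow> 'a::comm_ring_1 cpoly \<Rightarrow> (monom \<times> monom \<Rightarrow> 'a) \<Rightarrow> 'a" where
  "lin_part V f w = (\<Sum>v\<in>V. Poly_Mapping.lookup f (Poly_Mapping.single v 1) * w v)"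

text \<open>Zariski tangent space at the origin of Spec K[c]/I, as a subspace of K^V.\<close>
definition tangent_space :: "(monom \<times> monom) set \<Rightarrow> 'a::comm_ring_1 cpoly set \<Rightarrow> (monom \<times> monom \<Rightarrow> 'a) set" where
  "tangent_space V I = {w. (\<forall>v. v \<notin> V \<longrightarrow> w v = 0) \<and> (\<forall>f\<in>I. lin_part V f w = 0)}"

definition lin_indep :: "('b \<Rightarrow> 'a::field) set \<Rightarrow> bool" where
  "lin_indep W \<longleftrightarrow> finite W \<and> (\<forall>u. (\<forall>x. (\<Sum>w\<in>W. u w * w x) = 0) \<longrightarrow> (\<forall>w\<in>W. u w = 0))"

definition vdim :: "('b \<Rightarrow> 'a::field) set \<Rightarrow> nat" where
  "vdim U = Max {card W | W. W \<subseteq> U \<and> lin_indep W}"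

definition stratum_ed :: "'a::field itself \<Rightarrow> nat \<Rightarrow> (monom \<Rightarrow> monom \<Rightarrow> bool) \<Rightarrow> monom set \<Rightarrow> nat \<Rightarrow> nat" where
  "stratum_ed _ n le J d = vdim (tangent_space (stratum_vars n le J d)
      (ideal_gen (stratum_gens n le J d :: 'a cpoly set)))"

end

theory Submission
  imports Defs "HOL-Library.FuncSet" "HOL-Library.Function_Algebras"
begin

(*
  Lift every minimal generator x^alpha of J to degree d by multiplying with a power
  of x_0, and pair it with every term x^beta of B = {beta in T_d \ J : x_1 x^beta in J}.
  The parameters c_(lift alpha, beta) are |G(J)| * |B| distinct coordinates of the stratum,
  and none of them occurs linearly in any defining equation.  Indeed, in an S-polynomial
  S(F_a, F_a') such a parameter only multiplies the term x^(lcm/a) x^beta, which lies in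
  J_{>=d} by the Borel property; reduction steps keep the linear parts in these parameters
  supported on terms of J_{>=d}; and a complete reduction has no term in J_{>=d}.  Hence
  the unit vectors in these coordinates lie in the Zariski tangent space at the origin.
*)

section \<open>Arithmetic of terms\<close>

lemma tdeg_superset:
  assumes "finite K" "Poly_Mapping.keys a \<subseteq> K"
  shows "tdeg a = sum (Poly_Mapping.lookup a) K"
  unfolding tdeg_def using assms
  by (intro sum.mono_neutral_left) (auto simp: in_keys_iff)

lemma keys_add_nat: "Poly_Mapping.keys ((a::monom) + b) = Poly_Mapping.keys a \<union> Poly_Mapping.keys b"
  by (auto simp: in_keys_iff lookup_add)

lemma keys_minus_nat: "Poly_Mapping.keys ((a::monom) - b) \<subseteq> Poly_Mapping.keys a"
  by (auto simp: in_keys_iff lookup_minus)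

lemma tdeg_add: "tdeg (a + b) = tdeg a + tdeg b"
proof -
  let ?K = "Poly_Mapping.keys a \<union> Poly_Mapping.keys b"
  have "tdeg (a + b) = sum (Poly_Mapping.lookup (a + b)) ?K"
    by (rule tdeg_superset) (auto simp: keys_add_nat)
  also have "\<dots> = sum (Poly_Mapping.lookup a) ?K + sum (Poly_Mapping.lookup b) ?K"
    by (simp add: lookup_add sum.distrib)
  also have "\<dots> = tdeg a + tdeg b"
    by (subst (1 2) tdeg_superset[of ?K]) auto
  finally show ?thesis .
qed

lemma tdeg_zero_iff: "tdeg a = 0 \<longleftrightarrow> a = 0"
proof
  assume "tdeg a = 0"
  then have "\<forall>i\<in>Poly_Mapping.keys a. Poly_Mapping.lookup a i = 0"
    unfolding tdeg_def by simp
  then show "a = 0" by (auto simp: in_keys_iff intro: poly_mapping_eqI)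
qed (simp add: tdeg_def)

lemma tdeg_0 [simp]: "tdeg 0 = 0"
  by (simp add: tdeg_def)

lemma tdeg_single: "tdeg (Poly_Mapping.single i k) = k"
  unfolding tdeg_def by (cases "k = 0") auto

lemma tdeg_xvar: "tdeg (xvar i) = 1"
  by (simp add: xvar_def tdeg_single)

lemma tdvd_tdeg_less: "tdvd a b \<Longrightarrow> a \<noteq> b \<Longrightarrow> tdeg a < tdeg b"
  using tdeg_zero_iff by (fastforce simp: tdvd_def tdeg_add)

lemma tdvd_trans: "tdvd a b \<Longrightarrow> tdvd b c \<Longrightarrow> tdvd a c"
  by (auto simp: tdvd_def add.assoc)

lemma tdvd_refl: "tdvd a a"
  by (auto simp: tdvd_def intro: exI[of _ 0])

lemma tdvd_iff_le: "tdvd x y \<longleftrightarrow> (\<forall>i. Poly_Mapping.lookup x i \<le> Poly_Mapping.lookup y i)"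
proof
  assume "\<forall>i. Poly_Mapping.lookup x i \<le> Poly_Mapping.lookup y i"
  then have "y = x + (y - x)"
    by (intro poly_mapping_eqI) (simp add: lookup_add lookup_minus)
  then show "tdvd x y" unfolding tdvd_def by blast
qed (auto simp: tdvd_def lookup_add)

lemma split_var:
  assumes "Poly_Mapping.lookup c i > 0"
  shows "c = xvar i + (c - xvar i)"
  using assms
  by (intro poly_mapping_eqI) (auto simp: xvar_def lookup_add lookup_minus lookup_single when_def)

lemma is_term_add: "is_term n (a + b) \<longleftrightarrow> is_term n a \<and> is_term n b"
  by (auto simp: is_term_def keys_add_nat)

lemma is_term_tdvd: "tdvd a b \<Longrightarrow> is_term n b \<Longrightarrow> is_term n a"
  by (auto simp: tdvd_def is_term_add)

lemma is_term_single: "i \<le> n \<Longrightarrow> is_term n (Poly_Mapping.single i k)"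
  by (simp add: is_term_def)

lemma divisor_of_deg:
  "k \<le> tdeg c \<Longrightarrow> \<exists>c1. tdvd c1 c \<and> tdeg c1 = k"
proof (induction k)
  case 0 then show ?case by (intro exI[of _ 0]) (auto simp: tdvd_def tdeg_def)
next
  case (Suc k)
  then obtain c1 c2 where c: "c = c1 + c2" "tdeg c1 = k" by (auto simp: tdvd_def)
  with Suc.prems have "c2 \<noteq> 0" by (auto simp: tdeg_add tdeg_zero_iff)
  then obtain i where "Poly_Mapping.lookup c2 i > 0" by (metis lookup_zero neq0_conv poly_mapping_eqI)
  from split_var[OF this] have "c = (c1 + xvar i) + (c2 - xvar i)"
    using c by (metis add.assoc)
  then show ?case using c
    by (intro exI[of _ "c1 + xvar i"]) (auto simp: tdvd_def tdeg_add tdeg_xvar)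
qed

lemma tdeg_one: "tdeg b = 1 \<Longrightarrow> \<exists>i. b = xvar i"
proof -
  assume b1: "tdeg b = 1"
  then have "b \<noteq> 0" by (auto simp: tdeg_zero_iff)
  then obtain i where "Poly_Mapping.lookup b i > 0" by (metis lookup_zero neq0_conv poly_mapping_eqI)
  from split_var[OF this] have b: "b = xvar i + (b - xvar i)" .
  with b1 have "tdeg (b - xvar i) = 0" by (metis tdeg_add tdeg_xvar add_left_cancel add.right_neutral)
  then show ?thesis using b by (auto simp: tdeg_zero_iff)
qed

lemma finite_terms_deg: "finite (terms_deg n t)"
proof -
  let ?F = "\<lambda>a::monom. restrict (Poly_Mapping.lookup a) {..n}"
  have "inj_on ?F (terms_deg n t)"
  proof (rule inj_onI)
    fix a b assume ab: "a \<in> terms_deg n t" "b \<in> terms_deg n t" and eq: "?F a = ?F b"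
    show "a = b"
    proof (rule poly_mapping_eqI)
      fix i show "Poly_Mapping.lookup a i = Poly_Mapping.lookup b i"
      proof (cases "i \<le> n")
        case True
        then show ?thesis using fun_cong[OF eq, of i] by simp
      next
        case False
        then have "i \<notin> Poly_Mapping.keys a" "i \<notin> Poly_Mapping.keys b"
          using ab by (auto simp: terms_deg_def is_term_def)
        then show ?thesis by (simp add: in_keys_iff)
      qed
    qed
  qed
  moreover have "?F ` terms_deg n t \<subseteq> PiE {..n} (\<lambda>_. {..t})"
  proof
    fix g assume "g \<in> ?F ` terms_deg n t"
    then obtain a where a: "a \<in> terms_deg n t" and g: "g = ?F a" by auto
    have "Poly_Mapping.lookup a i \<le> t" for i
    proof (cases "i \<in> Poly_Mapping.keys a")
      case True
      then have "Poly_Mapping.lookup a i \<le> tdeg a" unfolding tdeg_def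
        by (intro member_le_sum) auto
      then show ?thesis using a by (simp add: terms_deg_def)
    qed (simp add: in_keys_iff)
    then show "g \<in> PiE {..n} (\<lambda>_. {..t})" using g by auto
  qed
  moreover have "finite (PiE {..n} (\<lambda>_. {..t::nat}))" by (intro finite_PiE) auto
  ultimately show ?thesis by (metis finite_imageD finite_subset)
qed

section \<open>Saturated Borel ideals\<close>

lemma mideal_add: "monomial_ideal n J \<Longrightarrow> a \<in> J \<Longrightarrow> is_term n b \<Longrightarrow> a + b \<in> J"
  unfolding monomial_ideal_def by blast

lemma mideal_term: "monomial_ideal n J \<Longrightarrow> a \<in> J \<Longrightarrow> is_term n a"
  unfolding monomial_ideal_def by blast

lemma borel_chain:
  assumes bo: "borel n J" and b: "b + xvar i \<in> J" and "i \<le> k" "k \<le> n"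
  shows "b + xvar k \<in> J"
  using assms(3,4)
proof (induction k)
  case 0 then show ?case using b by simp
next
  case (Suc k)
  show ?case
  proof (cases "i = Suc k")
    case False
    then have "b + xvar k \<in> J" and "k < n" using Suc by auto
    moreover have "Poly_Mapping.lookup (b + xvar k) k > 0" by (simp add: lookup_add xvar_def)
    ultimately have "b + xvar k - xvar k + xvar (Suc k) \<in> J" using bo unfolding borel_def by blast
    then show ?thesis by simp
  qed (use b in simp)
qed

text \<open>For a saturated Borel ideal, x_0 is a non-zero-divisor modulo J: if x_0 \<mu> \<in> J then
  by the Borel property x_i \<mu> \<in> J for all i, hence \<mu> \<in> J by saturation.\<close>
lemma sat_x0:
  assumes bo: "borel n J" and sa: "saturated n J" and \<mu>: "is_term n \<mu>" "\<mu> + xvar 0 \<in> J"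
  shows "\<mu> \<in> J"
proof -
  have "\<mu> + b \<in> J" if b: "b \<in> terms_deg n 1" for b
  proof -
    obtain i where i: "b = xvar i" using tdeg_one b by (auto simp: terms_deg_def)
    then have "i \<le> n" using b by (auto simp: terms_deg_def is_term_def xvar_def)
    then show ?thesis using borel_chain[OF bo \<mu>(2), of i] i by simp
  qed
  then show ?thesis using sa \<mu>(1) unfolding saturated_def by blast
qed

lemma sat_x0_pow:
  assumes bo: "borel n J" and sa: "saturated n J" and \<mu>: "is_term n \<mu>"
  shows "\<mu> + Poly_Mapping.single 0 k \<in> J \<Longrightarrow> \<mu> \<in> J"
proof (induction k)
  case (Suc k)
  have "Poly_Mapping.single 0 (Suc k) = Poly_Mapping.single 0 k + xvar 0"
    by (simp add: xvar_def flip: single_add)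
  then have "(\<mu> + Poly_Mapping.single 0 k) + xvar 0 \<in> J" using Suc.prems by (simp add: add.assoc)
  then have "\<mu> + Poly_Mapping.single 0 k \<in> J"
    by (rule sat_x0[OF bo sa, rotated]) (simp add: is_term_add \<mu> is_term_single)
  then show ?case by (rule Suc.IH)
qed simp

lemma mingens_exists: "t \<in> X \<Longrightarrow> \<exists>m\<in>mingens X. tdvd m t"
proof (induction "tdeg t" arbitrary: t rule: less_induct)
  case less
  show ?case
  proof (cases "t \<in> mingens X")
    case True then show ?thesis using tdvd_refl by blast
  next
    case False
    then obtain b where b: "b \<in> X" "tdvd b t" "b \<noteq> t" using less.prems unfolding mingens_def by blast
    then obtain m where "m \<in> mingens X" "tdvd m b" using less tdvd_tdeg_less by blast
    then show ?thesis using b tdvd_trans by blast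
  qed
qed

lemma mingens_x0:
  assumes mi: "monomial_ideal n J" and bo: "borel n J" and sa: "saturated n J"
    and al: "\<alpha> \<in> mingens J"
  shows "Poly_Mapping.lookup \<alpha> 0 = 0"
proof (rule ccontr)
  assume "Poly_Mapping.lookup \<alpha> 0 \<noteq> 0"
  then have a: "\<alpha> = (\<alpha> - xvar 0) + xvar 0" using split_var[of \<alpha> 0] by (simp add: add.commute)
  have aJ: "\<alpha> \<in> J" using al by (simp add: mingens_def)
  then have "is_term n (\<alpha> - xvar 0)" using mideal_term[OF mi] a is_term_add by metis
  then have "\<alpha> - xvar 0 \<in> J" using sat_x0[OF bo sa] a aJ by simp
  moreover have "tdvd (\<alpha> - xvar 0) \<alpha>" using a unfolding tdvd_def by blast
  moreover have "\<alpha> - xvar 0 \<noteq> \<alpha>" using a by (metis add_cancel_left_right one_neq_zero tdeg_zero_iff tdeg_xvar)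
  ultimately show False using al unfolding mingens_def by blast
qed

text \<open>A minimal generator of degree m forces the Hilbert function to be at least m in every
  degree t \<ge> m: for each s < m pick a divisor \<mu>_s of \<alpha> of degree s; the terms
  \<mu>_s x_0^(t-s) are pairwise distinct (different powers of x_0) and lie outside J.\<close>
lemma gen_deg_le_hilb_fun:
  assumes mi: "monomial_ideal n J" and bo: "borel n J" and sa: "saturated n J"
    and al: "\<alpha> \<in> mingens J" and t: "tdeg \<alpha> \<le> t"
  shows "tdeg \<alpha> \<le> hilb_fun n J t"
proof -
  define m where "m = tdeg \<alpha>"
  have at: "is_term n \<alpha>" using al mideal_term[OF mi] by (simp add: mingens_def)
  have a0: "Poly_Mapping.lookup \<alpha> 0 = 0" using mingens_x0[OF mi bo sa al] .
  have "\<forall>s\<in>{..<m}. \<exists>c. tdvd c \<alpha> \<and> tdeg c = s"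
    using divisor_of_deg m_def by auto
  then obtain \<mu> where \<mu>: "\<And>s. s < m \<Longrightarrow> tdvd (\<mu> s) \<alpha> \<and> tdeg (\<mu> s) = s"
    by (metis lessThan_iff)
  define f where "f s = \<mu> s + Poly_Mapping.single 0 (t - s)" for s
  have f0: "Poly_Mapping.lookup (f s) 0 = t - s" if "s < m" for s
  proof -
    have "Poly_Mapping.lookup (\<mu> s) 0 = 0" using \<mu>[OF that] a0 by (metis le_zero_eq tdvd_iff_le)
    then show ?thesis by (simp add: f_def lookup_add)
  qed
  have "inj_on f {..<m}"
  proof (rule inj_onI)
    fix x y assume "x \<in> {..<m}" "y \<in> {..<m}" "f x = f y"
    then show "x = y" using f0 t m_def by (metis diff_diff_cancel less_imp_le_nat order.trans lessThan_iff)
  qed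
  moreover have "f ` {..<m} \<subseteq> terms_deg n t - J"
  proof
    fix g assume "g \<in> f ` {..<m}"
    then obtain s where s: "s < m" "g = f s" by auto
    have dv: "tdvd (\<mu> s) \<alpha>" and dg: "tdeg (\<mu> s) = s" using \<mu>[OF s(1)] by auto
    have mt: "is_term n (\<mu> s)" using is_term_tdvd[OF dv at] .
    have "g \<notin> J"
    proof
      assume "g \<in> J"
      then have "\<mu> s \<in> J" using sat_x0_pow[OF bo sa mt] s by (simp add: f_def)
      moreover have "\<mu> s \<noteq> \<alpha>" using dg s m_def by auto
      ultimately show False using al dv unfolding mingens_def by blast
    qed
    moreover have "tdeg g = t" using s dg t m_def by (simp add: f_def tdeg_add tdeg_single)
    ultimately show "g \<in> terms_deg n t - J"
      using s mt by (simp add: f_def is_term_add is_term_single terms_deg_def)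
  qed
  ultimately have "card {..<m} \<le> card (terms_deg n t - J)"
    using finite_terms_deg by (intro card_inj_on_le) auto
  then show ?thesis by (simp add: m_def hilb_fun_def)
qed

lemma gen_deg_bound:
  assumes mi: "monomial_ideal n J" and bo: "borel n J" and sa: "saturated n J"
    and hp: "hilb_poly_const n J d" and al: "\<alpha> \<in> mingens J"
  shows "tdeg \<alpha> \<le> d"
proof -
  obtain t0 where t0: "\<And>t. t \<ge> t0 \<Longrightarrow> hilb_fun n J t = d" using hp unfolding hilb_poly_const_def by blast
  have "tdeg \<alpha> \<le> hilb_fun n J (max t0 (tdeg \<alpha>))"
    by (rule gen_deg_le_hilb_fun[OF mi bo sa al]) simp
  then show ?thesis using t0[of "max t0 (tdeg \<alpha>)"] by simp
qed

lemma mingens_trunc_deg: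
  assumes mi: "monomial_ideal n J" and bo: "borel n J" and sa: "saturated n J"
    and hp: "hilb_poly_const n J d" and a: "a \<in> mingens (trunc_ideal J d)"
  shows "a \<in> terms_deg n d"
proof -
  have aJ: "a \<in> J" and ad: "d \<le> tdeg a" using a by (auto simp: mingens_def trunc_ideal_def)
  have at: "is_term n a" using mi aJ by (rule mideal_term)
  obtain \<alpha> where al: "\<alpha> \<in> mingens J" "tdvd \<alpha> a" using mingens_exists[OF aJ] by blast
  have ald: "tdeg \<alpha> \<le> d" using gen_deg_bound[OF mi bo sa hp al(1)] .
  obtain c where c: "a = \<alpha> + c" using al(2) unfolding tdvd_def by blast
  have "d - tdeg \<alpha> \<le> tdeg c" using c ad by (simp add: tdeg_add)
  then obtain c1 where c1: "tdvd c1 c" "tdeg c1 = d - tdeg \<alpha>"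
    using divisor_of_deg by blast
  have "is_term n c1" using at c c1(1) is_term_tdvd by (simp add: is_term_add)
  then have "\<alpha> + c1 \<in> trunc_ideal J d"
    using al(1) mi c1(2) ald by (auto simp: mingens_def trunc_ideal_def tdeg_add intro: mideal_add)
  moreover have "tdvd (\<alpha> + c1) a" using c c1(1) unfolding tdvd_def by (metis add.assoc)
  ultimately have "\<alpha> + c1 = a" using a unfolding mingens_def by blast
  then have "tdeg a = d" using c1(2) ald by (auto simp: tdeg_add)
  then show ?thesis using at by (simp add: terms_deg_def)
qed

lemma deg_d_mingens_trunc:
  assumes "a \<in> J" "tdeg a = d"
  shows "a \<in> mingens (trunc_ideal J d)"
  using assms tdvd_tdeg_less unfolding mingens_def trunc_ideal_def by fastforce

section \<open>Lifting minimal generators to degree d\<close>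

definition lift_to_deg :: "nat \<Rightarrow> monom \<Rightarrow> monom" where
  "lift_to_deg d \<alpha> = \<alpha> + Poly_Mapping.single 0 (d - tdeg \<alpha>)"

lemma lift_to_deg_gen:
  assumes mi: "monomial_ideal n J" and bo: "borel n J" and sa: "saturated n J"
    and hp: "hilb_poly_const n J d" and al: "\<alpha> \<in> mingens J"
  shows "lift_to_deg d \<alpha> \<in> J" "tdeg (lift_to_deg d \<alpha>) = d"
proof -
  have "tdeg \<alpha> \<le> d" using gen_deg_bound[OF mi bo sa hp al] .
  moreover have "\<alpha> \<in> J" using al by (simp add: mingens_def)
  ultimately show "lift_to_deg d \<alpha> \<in> J" "tdeg (lift_to_deg d \<alpha>) = d"
    using mideal_add[OF mi] by (simp_all add: lift_to_deg_def is_term_single tdeg_add tdeg_single)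
qed

text \<open>Since generators are x_0-free, the lift remembers the generator.\<close>
lemma inj_on_lift_to_deg:
  assumes mi: "monomial_ideal n J" and bo: "borel n J" and sa: "saturated n J"
  shows "inj_on (lift_to_deg d) (mingens J)"
proof (rule inj_onI)
  fix \<alpha> \<alpha>' assume al: "\<alpha> \<in> mingens J" "\<alpha>' \<in> mingens J" and eq: "lift_to_deg d \<alpha> = lift_to_deg d \<alpha>'"
  have "Poly_Mapping.lookup (lift_to_deg d \<alpha>) 0 = Poly_Mapping.lookup (lift_to_deg d \<alpha>') 0" using eq by simp
  then have "d - tdeg \<alpha> = d - tdeg \<alpha>'"
    using mingens_x0[OF mi bo sa] al by (simp add: lift_to_deg_def lookup_add)
  then show "\<alpha> = \<alpha>'" using eq unfolding lift_to_deg_def by simp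
qed

text \<open>Any other generator a' of J_{\<ge>d} exceeds the lift of \<alpha> in some variable x_i, i \<ge> 1:
  otherwise the x_0-free part of a' would be a divisor of \<alpha> lying in J (saturation).\<close>
lemma other_gen_exceeds_lift:
  assumes mi: "monomial_ideal n J" and bo: "borel n J" and sa: "saturated n J"
    and hp: "hilb_poly_const n J d" and al: "\<alpha> \<in> mingens J"
    and a': "a' \<in> mingens (trunc_ideal J d)" and ne: "a' \<noteq> lift_to_deg d \<alpha>"
  shows "\<exists>i\<ge>1. Poly_Mapping.lookup (lift_to_deg d \<alpha>) i < Poly_Mapping.lookup a' i"
proof (rule ccontr)
  assume H: "\<not> ?thesis"
  have a'd: "a' \<in> terms_deg n d" using mingens_trunc_deg[OF mi bo sa hp a'] .
  define k' where "k' = Poly_Mapping.lookup a' 0"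
  define \<gamma> where "\<gamma> = a' - Poly_Mapping.single 0 k'"
  have a'eq: "a' = \<gamma> + Poly_Mapping.single 0 k'"
    unfolding \<gamma>_def k'_def by (intro poly_mapping_eqI) (simp add: lookup_add lookup_minus lookup_single when_def)
  have "is_term n \<gamma>"
    using a'd keys_minus_nat[of a'] unfolding \<gamma>_def terms_deg_def is_term_def by blast
  moreover have "\<gamma> + Poly_Mapping.single 0 k' \<in> J"
    using a' a'eq by (simp add: mingens_def trunc_ideal_def)
  ultimately have gJ: "\<gamma> \<in> J" by (rule sat_x0_pow[OF bo sa])
  have "tdvd \<gamma> \<alpha>"
    unfolding tdvd_iff_le
  proof
    fix i show "Poly_Mapping.lookup \<gamma> i \<le> Poly_Mapping.lookup \<alpha> i"
    proof (cases "i = 0")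
      case False
      then have "Poly_Mapping.lookup a' i \<le> Poly_Mapping.lookup (lift_to_deg d \<alpha>) i"
        using H by (simp add: not_less)
      then show ?thesis using False by (simp add: \<gamma>_def lift_to_deg_def lookup_minus lookup_add lookup_single)
    qed (simp add: \<gamma>_def k'_def lookup_minus)
  qed
  then have "\<gamma> = \<alpha>" using al gJ unfolding mingens_def by blast
  moreover have "tdeg a' = d" using a'd by (simp add: terms_deg_def)
  ultimately have "k' = d - tdeg \<alpha>" using a'eq by (simp add: tdeg_add tdeg_single)
  then have "a' = lift_to_deg d \<alpha>" using a'eq \<open>\<gamma> = \<alpha>\<close> by (simp add: lift_to_deg_def)
  with ne show False by simp
qed

text \<open>For a lifted generator a, another generator a' of J_{\<ge>d} and \<beta> \<in> B,
  the term x^(lcm(a,a')/a) x^\<beta> lies in J_{\<ge>d}: the cofactor contains some x_i with i \<ge> 1,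
  and x_i x^\<beta> \<in> J because x_1 x^\<beta> \<in> J and J is Borel.\<close>
lemma lcm_cofactor_in_trunc:
  assumes mi: "monomial_ideal n J" and bo: "borel n J" and sa: "saturated n J"
    and hp: "hilb_poly_const n J d" and al: "\<alpha> \<in> mingens J"
    and a': "a' \<in> mingens (trunc_ideal J d)" and ne: "a' \<noteq> lift_to_deg d \<alpha>"
    and b: "b \<in> terms_deg n d" and b1: "xvar 1 + b \<in> J"
  shows "(a' - lift_to_deg d \<alpha>) + b \<in> trunc_ideal J d"
proof -
  let ?a = "lift_to_deg d \<alpha>"
  have a'd: "a' \<in> terms_deg n d" using mingens_trunc_deg[OF mi bo sa hp a'] .
  obtain i where i: "1 \<le> i" "Poly_Mapping.lookup ?a i < Poly_Mapping.lookup a' i"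
    using other_gen_exceeds_lift[OF mi bo sa hp al a' ne] by blast
  then have pos: "Poly_Mapping.lookup (a' - ?a) i > 0" by (simp add: lookup_minus)
  then have "i \<in> Poly_Mapping.keys a'" by (simp add: in_keys_iff lookup_minus)
  then have "i \<le> n" using a'd by (auto simp: terms_deg_def is_term_def)
  define r where "r = (a' - ?a) - xvar i"
  have split: "a' - ?a = xvar i + r" using split_var[OF pos] r_def by simp
  have "b + xvar i \<in> J" using borel_chain[OF bo _ i(1) \<open>i \<le> n\<close>, of b] b1 by (simp add: add.commute)
  moreover have "is_term n r"
    using a'd keys_minus_nat[of "a' - ?a" "xvar i"] keys_minus_nat[of a' ?a]
    unfolding r_def terms_deg_def is_term_def by blast
  ultimately have "(b + xvar i) + r \<in> J" by (rule mideal_add[OF mi])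
  moreover have "(a' - ?a) + b = (b + xvar i) + r" using split by (simp add: ac_simps)
  moreover have "d \<le> tdeg ((a' - ?a) + b)" using b by (simp add: tdeg_add terms_deg_def)
  ultimately show ?thesis by (simp add: trunc_ideal_def)
qed

text \<open>The pairs (lift \<alpha>, \<beta>) with \<beta> \<in> T_d \ J are parameters of the stratum: by the segment
  property every term of degree d above the element lift \<alpha> of J is in J, so \<beta> < lift \<alpha>.\<close>
lemma lifted_pairs_stratum_vars:
  assumes mo: "monomorder n le" and hs: "hilb_segment n le J d"
    and al: "\<alpha> \<in> mingens J" and b: "b \<in> terms_deg n d - J"
  shows "(lift_to_deg d \<alpha>, b) \<in> stratum_vars n le J d"
proof -
  let ?a = "lift_to_deg d \<alpha>"
  have mi: "monomial_ideal n J" and sa: "saturated n J" and bo: "borel n J"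
    and hp: "hilb_poly_const n J d" and seg: "segment n le d (J \<inter> terms_deg n d)"
    using hs by (auto simp: hilb_segment_def)
  have aJ: "?a \<in> J" and ad: "tdeg ?a = d" using lift_to_deg_gen[OF mi bo sa hp al] by auto
  have at: "is_term n ?a" using mi aJ by (rule mideal_term)
  have "\<not> tless le ?a b"
    using seg aJ ad at b unfolding segment_def by (auto simp: terms_deg_def)
  moreover have "le ?a b \<or> le b ?a"
    using mo at b unfolding monomorder_def terms_deg_def by blast
  moreover have "?a \<noteq> b" using aJ b by auto
  ultimately have "tless le b ?a" by (auto simp: tless_def)
  then have "b \<in> tail_terms n le J ?a" using b ad by (simp add: tail_terms_def)
  moreover have "?a \<in> mingens (trunc_ideal J d)" using deg_d_mingens_trunc[OF aJ ad] .
  ultimately show ?thesis unfolding stratum_vars_def by blast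
qed

lemma finite_stratum_vars:
  assumes hs: "hilb_segment n le J d"
  shows "finite (stratum_vars n le J d)"
proof -
  have "stratum_vars n le J d \<subseteq> terms_deg n d \<times> terms_deg n d"
    using mingens_trunc_deg[of n J d] hs
    by (auto simp: stratum_vars_def hilb_segment_def tail_terms_def terms_deg_def)
  then show ?thesis using finite_terms_deg by (meson finite_SigmaI finite_subset)
qed

section \<open>Constant and linear coefficients in K[c]\<close>

lemma Sum_when_add:
  fixes k l :: "'k::cancel_comm_monoid_add" and g :: "'k \<Rightarrow> 'v::comm_monoid_add"
  shows "Sum_any (\<lambda>q. g q when k = l + q) = (g (k - l) when (\<exists>s. k = l + s))"
proof (cases "\<exists>s. k = l + s")
  case True
  then obtain s where s: "k = l + s" by blast
  have "Sum_any (\<lambda>q. g q when k = l + q) = Sum_any (\<lambda>q. g q when q = s)"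
    using s by (intro Sum_any.cong) (auto simp: when_def)
  then show ?thesis using s by simp
qed (simp add: when_def)

lemma lookup_single_mult:
  fixes c :: "'k::cancel_comm_monoid_add" and F :: "'k \<Rightarrow>\<^sub>0 'v::comm_semiring_1"
  shows "Poly_Mapping.lookup (Poly_Mapping.single c r * F) t
     = (r * Poly_Mapping.lookup F (t - c) when (\<exists>s. t = c + s))"
proof -
  have "Poly_Mapping.lookup (Poly_Mapping.single c r * F) t
      = Sum_any (\<lambda>l. ((r * Sum_any (\<lambda>q. Poly_Mapping.lookup F q when t = l + q)) when c = l))"
    by (simp add: lookup_mult lookup_single when_mult)
  also have "\<dots> = (r * Poly_Mapping.lookup F (t - c) when (\<exists>s. t = c + s))"
    by (simp add: Sum_when_add mult_when)
  finally show ?thesis .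
qed

lemma lookup_mult_divs:
  fixes h f :: "'k::cancel_comm_monoid_add \<Rightarrow>\<^sub>0 'v::comm_semiring_1"
  assumes fin: "finite D" and D: "D = {l. \<exists>s. k = l + s}"
  shows "Poly_Mapping.lookup (h * f) k = (\<Sum>l\<in>D. Poly_Mapping.lookup h l * Poly_Mapping.lookup f (k - l))"
proof -
  have "Poly_Mapping.lookup (h * f) k = Sum_any (\<lambda>l. (Poly_Mapping.lookup h l * Poly_Mapping.lookup f (k - l) when l \<in> D))"
    by (simp add: lookup_mult Sum_when_add D mult_when)
  also have "\<dots> = (\<Sum>l\<in>D. Poly_Mapping.lookup h l * Poly_Mapping.lookup f (k - l))"
    by (subst Sum_any.expand_superset[OF fin]) (auto simp: when_def)
  finally show ?thesis .
qed

lemma single_one_nonzero: "Poly_Mapping.single v (1::nat) \<noteq> 0"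
  by (metis lookup_single_eq lookup_zero one_neq_zero)

type_synonym cmon = "(monom \<times> monom) \<Rightarrow>\<^sub>0 nat"

lemma divs_zero: "{l :: cmon. \<exists>s. 0 = l + s} = {0}"
proof -
  have "l = 0" if "0 = l + s" for l s :: cmon
  proof (rule poly_mapping_eqI)
    fix i have "Poly_Mapping.lookup (l + s) i = 0" using that by simp
    then show "Poly_Mapping.lookup l i = Poly_Mapping.lookup 0 i" by (simp add: lookup_add)
  qed
  then show ?thesis by auto
qed

lemma divs_single:
  "{l :: cmon. \<exists>s. Poly_Mapping.single v 1 = l + s} = {0, Poly_Mapping.single v 1}"
proof -
  have "l = 0 \<or> l = Poly_Mapping.single v 1" if h: "Poly_Mapping.single v 1 = l + s" for l s :: cmon
  proof -
    have le: "Poly_Mapping.lookup l i + Poly_Mapping.lookup s i = (1 when v = i)" for i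
      using arg_cong[OF h, of "\<lambda>p. Poly_Mapping.lookup p i"] by (simp add: lookup_add lookup_single)
    show ?thesis
    proof (cases "Poly_Mapping.lookup l v = 0")
      case True
      have "l = 0"
      proof (rule poly_mapping_eqI)
        fix i show "Poly_Mapping.lookup l i = Poly_Mapping.lookup 0 i"
          using le[of i] True by (cases "v = i") auto
      qed
      then show ?thesis ..
    next
      case False
      have "l = Poly_Mapping.single v 1"
      proof (rule poly_mapping_eqI)
        fix i show "Poly_Mapping.lookup l i = Poly_Mapping.lookup (Poly_Mapping.single v 1) i"
          using le[of i] False by (cases "v = i") (auto simp: lookup_single)
      qed
      then show ?thesis ..
    qed
  qed
  moreover have "Poly_Mapping.single v 1 = (0::cmon) + Poly_Mapping.single v 1"
    "Poly_Mapping.single v 1 = Poly_Mapping.single v 1 + (0::cmon)" by simp_all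
  ultimately show ?thesis by blast
qed

lemma cmult_const:
  fixes h f :: "'a::comm_ring_1 cpoly"
  shows "Poly_Mapping.lookup (h * f) 0 = Poly_Mapping.lookup h 0 * Poly_Mapping.lookup f 0"
  using lookup_mult_divs[OF _ divs_zero[symmetric], of h f] by simp

lemma cmult_lin:
  fixes h f :: "'a::comm_ring_1 cpoly"
  shows "Poly_Mapping.lookup (h * f) (Poly_Mapping.single v (Suc 0))
    = Poly_Mapping.lookup h 0 * Poly_Mapping.lookup f (Poly_Mapping.single v (Suc 0))
      + Poly_Mapping.lookup h (Poly_Mapping.single v (Suc 0)) * Poly_Mapping.lookup f 0"
proof -
  have "Poly_Mapping.lookup (h * f) (Poly_Mapping.single v 1) = (\<Sum>l\<in>{0, Poly_Mapping.single v 1}.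
       Poly_Mapping.lookup h l * Poly_Mapping.lookup f (Poly_Mapping.single v 1 - l))"
    by (rule lookup_mult_divs) (simp_all only: divs_single finite.emptyI finite_insert)
  then show ?thesis using single_one_nonzero[of v] by (simp add: add.commute)
qed

lemma cvar_const: "Poly_Mapping.lookup (cvar w :: 'a::comm_ring_1 cpoly) 0 = 0"
  using single_one_nonzero[of w] by (simp add: cvar_def lookup_single when_def)

lemma cvar_lin: "Poly_Mapping.lookup (cvar w :: 'a::comm_ring_1 cpoly) (Poly_Mapping.single v (Suc 0)) = (1 when w = v)"
proof -
  have "Poly_Mapping.single w (Suc 0) = Poly_Mapping.single v (Suc 0) \<longleftrightarrow> w = v"
    by (metis lookup_single_eq lookup_single_not_eq nat.distinct(1))
  then show ?thesis by (simp add: cvar_def lookup_single)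
qed

lemma finite_tail: "finite (tail_terms n le J a)"
  by (rule finite_subset[OF _ finite_terms_deg[of n "tdeg a"]]) (auto simp: tail_terms_def)

lemma lookup_Fpoly:
  "Poly_Mapping.lookup (Fpoly n le J a :: 'a::comm_ring_1 cpoly xpoly) s
     = (1 when s = a) + (cvar (a, s) when s \<in> tail_terms n le J a)"
proof -
  have "(\<Sum>b\<in>tail_terms n le J a. Poly_Mapping.lookup (Poly_Mapping.single b (cvar (a, b) :: 'a cpoly)) s)
      = (\<Sum>b\<in>tail_terms n le J a. (cvar (a, s) when b = s))"
    by (intro sum.cong) (auto simp: lookup_single when_def)
  also have "\<dots> = (cvar (a, s) when s \<in> tail_terms n le J a)"
    using finite_tail[of n le J a] by (simp add: when_def)
  finally show ?thesis
    unfolding Fpoly_def by (simp add: lookup_add lookup_sum lookup_single eq_commute)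
qed

lemma Fpoly_const:
  "Poly_Mapping.lookup (Poly_Mapping.lookup (Fpoly n le J a :: 'a::comm_ring_1 cpoly xpoly) s) 0 = (1 when s = a)"
  by (simp add: lookup_Fpoly lookup_add cvar_const when_def)

lemma Fpoly_lin:
  "Poly_Mapping.lookup (Poly_Mapping.lookup (Fpoly n le J a :: 'a::comm_ring_1 cpoly xpoly) s) (Poly_Mapping.single v (Suc 0))
    = (1 when (a, s) = v \<and> s \<in> tail_terms n le J a)"
proof (cases "s = a")
  case True
  then have "s \<notin> tail_terms n le J a" by (simp add: tail_terms_def tless_def)
  then show ?thesis using True single_one_nonzero[of v] by (simp add: lookup_Fpoly lookup_one)
next
  case False
  then show ?thesis
    by (cases "s \<in> tail_terms n le J a") (simp_all add: lookup_Fpoly cvar_lin when_def)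
qed

lemma single_mult_F_const:
  "Poly_Mapping.lookup (Poly_Mapping.lookup (Poly_Mapping.single c 1 * (Fpoly n le J a :: 'a::comm_ring_1 cpoly xpoly)) t) 0
    = (1 when t = c + a)"
  by (cases "\<exists>s. t = c + s") (auto simp: lookup_single_mult Fpoly_const when_def)

lemma single_mult_F_lin:
  assumes "Poly_Mapping.lookup (Poly_Mapping.lookup (Poly_Mapping.single c 1 * (Fpoly n le J a :: 'a::comm_ring_1 cpoly xpoly)) t) (Poly_Mapping.single v (Suc 0)) \<noteq> 0"
  shows "\<exists>b. v = (a, b) \<and> t = c + b"
  using assms
  by (cases "\<exists>s. t = c + s") (auto simp: lookup_single_mult Fpoly_lin when_def split: if_splits)

section \<open>Reduction preserves the location of linear terms\<close>

definition lin_supported :: "(monom \<times> monom) set \<Rightarrow> monom set \<Rightarrow> 'a::comm_ring_1 cpoly xpoly \<Rightarrow> bool" where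
  "lin_supported Vs T g \<longleftrightarrow> (\<forall>t. Poly_Mapping.lookup (Poly_Mapping.lookup g t) 0 = 0 \<and>
     (\<forall>v\<in>Vs. Poly_Mapping.lookup (Poly_Mapping.lookup g t) (Poly_Mapping.single v 1) \<noteq> 0 \<longrightarrow> t \<in> T))"

text \<open>A reduction step g \<mapsto> g - g_(c+a) x^c F_a keeps this property: at the origin the
  subtracted polynomial is g_(c+a)(0) x^c x^a = 0 up to first order, except that the term
  x^(c+a) is cancelled exactly.\<close>
lemma lin_supported_red_step:
  assumes inv: "lin_supported Vs T g" and rs: "red_step n le J d g h"
  shows "lin_supported Vs T h"
proof -
  obtain a c where h: "h = g - Poly_Mapping.single c (Poly_Mapping.lookup g (c + a)) * Fpoly n le J a"
    using rs unfolding red_step_def by blast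
  define G where "G = Poly_Mapping.lookup g (c + a)"
  have G0: "Poly_Mapping.lookup G 0 = 0" using inv unfolding lin_supported_def G_def by blast
  have ht: "Poly_Mapping.lookup h t = Poly_Mapping.lookup g t -
      (G * Poly_Mapping.lookup (Fpoly n le J a) (t - c) when (\<exists>s. t = c + s))" for t
    unfolding h G_def by (simp add: lookup_minus lookup_single_mult)
  have lin: "Poly_Mapping.lookup (Poly_Mapping.lookup h t) (Poly_Mapping.single v (Suc 0))
      = (if t = c + a then 0 else Poly_Mapping.lookup (Poly_Mapping.lookup g t) (Poly_Mapping.single v (Suc 0)))"
    for t v
    using G0 unfolding ht
    by (cases "\<exists>s. t = c + s")
       (auto simp: lookup_minus cmult_lin Fpoly_const G_def when_def)
  show ?thesis
    unfolding lin_supported_def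
  proof (intro allI conjI ballI impI)
    fix t
    show "Poly_Mapping.lookup (Poly_Mapping.lookup h t) 0 = 0"
      using inv G0 unfolding lin_supported_def ht
      by (cases "\<exists>s. t = c + s") (simp_all add: lookup_minus cmult_const)
  next
    fix t v assume v: "v \<in> Vs" and ne: "Poly_Mapping.lookup (Poly_Mapping.lookup h t) (Poly_Mapping.single v 1) \<noteq> 0"
    then have "Poly_Mapping.lookup (Poly_Mapping.lookup g t) (Poly_Mapping.single v 1) \<noteq> 0"
      using lin[of t v] by (auto split: if_splits)
    then show "t \<in> T" using inv v unfolding lin_supported_def by blast
  qed
qed

lemma lin_supported_reduction:
  assumes "(red_step n le J d)\<^sup>*\<^sup>* g r" "lin_supported Vs T g"
  shows "lin_supported Vs T r"
  using assms by induction (auto intro: lin_supported_red_step)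

lemma lcm_facts:
  fixes a a' :: monom
  shows "a + (a' - a) - a = a' - a" "a + (a' - a) - a' = a - a'"
    "(a' - a) + a = a + (a' - a)" "(a - a') + a' = a + (a' - a)"
  by (auto intro!: poly_mapping_eqI simp: lookup_add lookup_minus)

text \<open>An S-polynomial S(F_a, F_a') vanishes at the origin, and a parameter c_(a,\<beta>) occurs
  linearly only in the term x^(lcm/a) x^\<beta>; this is where the key lemma enters.\<close>
lemma lin_supported_Spoly:
  assumes key: "\<And>a a' b. (a, b) \<in> Vs \<Longrightarrow> a' \<in> mingens (trunc_ideal J d) \<Longrightarrow> a' \<noteq> a
      \<Longrightarrow> (a' - a) + b \<in> T"
    and a: "a \<in> mingens (trunc_ideal J d)" and a': "a' \<in> mingens (trunc_ideal J d)"
  shows "lin_supported Vs T (Spoly n le J a a' :: 'a::comm_ring_1 cpoly xpoly)"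
proof (cases "a = a'")
  case True
  then show ?thesis by (simp add: Spoly_def Let_def lin_supported_def)
next
  case False
  define c where "c = a' - a"
  define c' where "c' = a - a'"
  have S: "Spoly n le J a a' = Poly_Mapping.single c 1 * (Fpoly n le J a :: 'a cpoly xpoly)
       - Poly_Mapping.single c' 1 * Fpoly n le J a'"
    by (simp add: Spoly_def Let_def lcm_facts c_def c'_def)
  have cc: "c + a = c' + a'" unfolding c_def c'_def using lcm_facts(3,4)[of a a'] by (simp add: add.commute)
  have "t \<in> T"
    if v: "v \<in> Vs" and ne: "Poly_Mapping.lookup (Poly_Mapping.lookup (Spoly n le J a a' :: 'a cpoly xpoly) t)
           (Poly_Mapping.single v (Suc 0)) \<noteq> 0" for t v
  proof -
    have "Poly_Mapping.lookup (Poly_Mapping.lookup (Poly_Mapping.single c 1 * (Fpoly n le J a :: 'a cpoly xpoly)) t) (Poly_Mapping.single v (Suc 0)) \<noteq> 0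
       \<or> Poly_Mapping.lookup (Poly_Mapping.lookup (Poly_Mapping.single c' 1 * (Fpoly n le J a' :: 'a cpoly xpoly)) t) (Poly_Mapping.single v (Suc 0)) \<noteq> 0"
      using ne unfolding S by (auto simp: lookup_minus)
    then show ?thesis
    proof
      assume "Poly_Mapping.lookup (Poly_Mapping.lookup (Poly_Mapping.single c 1 * (Fpoly n le J a :: 'a cpoly xpoly)) t) (Poly_Mapping.single v (Suc 0)) \<noteq> 0"
      then obtain b where "v = (a, b)" "t = c + b" using single_mult_F_lin by blast
      then show ?thesis using key[of a b a'] v a' False c_def by auto
    next
      assume "Poly_Mapping.lookup (Poly_Mapping.lookup (Poly_Mapping.single c' 1 * (Fpoly n le J a' :: 'a cpoly xpoly)) t) (Poly_Mapping.single v (Suc 0)) \<noteq> 0"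
      then obtain b where "v = (a', b)" "t = c' + b" using single_mult_F_lin by blast
      then show ?thesis using key[of a' b a] v a False c'_def by auto
    qed
  qed
  then show ?thesis
    unfolding lin_supported_def S by (auto simp: lookup_minus single_mult_F_const cc)
qed

definition flat_along :: "(monom \<times> monom) set \<Rightarrow> 'a::comm_ring_1 cpoly \<Rightarrow> bool" where
  "flat_along Vs f \<longleftrightarrow> Poly_Mapping.lookup f 0 = 0 \<and> (\<forall>v\<in>Vs. Poly_Mapping.lookup f (Poly_Mapping.single v 1) = 0)"

lemma flat_along_ideal_gen:
  assumes "f \<in> ideal_gen G" "\<And>g. g \<in> G \<Longrightarrow> flat_along Vs g"
  shows "flat_along Vs f"
  using assms(1)
proof induction
  case (base g) then show ?case by (rule assms(2))
qed (auto simp: flat_along_def lookup_add cmult_const cmult_lin)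

text \<open>If the key property holds for the parameters Vs, every defining equation of the stratum
  is flat along Vs: a complete reduction has no term in J_{\<ge>d}, so its linear parts along
  Vs, which live on such terms, vanish.\<close>
lemma stratum_gens_flat:
  assumes key: "\<And>a a' b. (a, b) \<in> Vs \<Longrightarrow> a' \<in> mingens (trunc_ideal J d) \<Longrightarrow> a' \<noteq> a
      \<Longrightarrow> (a' - a) + b \<in> trunc_ideal J d"
    and g: "g \<in> (stratum_gens n le J d :: 'a::comm_ring_1 cpoly set)"
  shows "flat_along Vs g"
proof -
  obtain r t a a' where gr: "g = Poly_Mapping.lookup r t"
    and a: "a \<in> mingens (trunc_ideal J d)" and a': "a' \<in> mingens (trunc_ideal J d)"
    and red: "is_reduction n le J d (Spoly n le J a a') r"
    using g unfolding stratum_gens_def by blast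
  have "lin_supported Vs (trunc_ideal J d) (Spoly n le J a a' :: 'a cpoly xpoly)"
    using lin_supported_Spoly[OF key a a'] by blast
  then have inv: "lin_supported Vs (trunc_ideal J d) r"
    using red lin_supported_reduction unfolding is_reduction_def by blast
  have reduced: "t \<notin> trunc_ideal J d" if "t \<in> Poly_Mapping.keys r"
    using that red mingens_exists unfolding is_reduction_def by blast
  show ?thesis
    unfolding flat_along_def
  proof (intro conjI ballI)
    show "Poly_Mapping.lookup g 0 = 0" using inv gr unfolding lin_supported_def by blast
  next
    fix v assume v: "v \<in> Vs"
    show "Poly_Mapping.lookup g (Poly_Mapping.single v 1) = 0"
    proof (rule ccontr)
      assume ne: "Poly_Mapping.lookup g (Poly_Mapping.single v 1) \<noteq> 0"
      then have "t \<in> trunc_ideal J d" using inv v gr unfolding lin_supported_def by blast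
      moreover have "t \<in> Poly_Mapping.keys r" using ne gr by (auto simp: in_keys_iff)
      ultimately show False using reduced by blast
    qed
  qed
qed

section \<open>Linear algebra of the tangent space\<close>

lemma sum_fun_apply: "(\<Sum>w\<in>W. (f w :: 'b \<Rightarrow> 'c::comm_monoid_add)) y = (\<Sum>w\<in>W. f w y)"
  by (induction W rule: infinite_finite_induct) auto

lemma lin_indep_card_bound:
  fixes W :: "('b \<Rightarrow> 'a::field) set"
  assumes fin: "finite V" and li: "lin_indep W" and sup: "\<And>w v. w \<in> W \<Longrightarrow> v \<notin> V \<Longrightarrow> w v = 0"
  shows "card W \<le> card V"
proof -
  interpret fv: vector_space "\<lambda>(c::'a) (f::'b \<Rightarrow> 'a) x. c * f x"
    by unfold_locales (auto simp: fun_eq_iff algebra_simps)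
  define e where "e v = (\<lambda>x::'b. if x = v then (1::'a) else 0)" for v :: 'b
  have "fv.independent W"
  proof (rule fv.independent_if_scalars_zero)
    show "finite W" using li by (simp add: lin_indep_def)
  next
    fix f :: "('b \<Rightarrow> 'a) \<Rightarrow> 'a" and x
    assume s: "(\<Sum>x\<in>W. (\<lambda>y. f x * x y)) = 0" and x: "x \<in> W"
    have "\<forall>y. (\<Sum>w\<in>W. f w * w y) = 0"
      using fun_cong[OF s] by (simp add: sum_fun_apply)
    then show "f x = 0" using li x unfolding lin_indep_def by blast
  qed
  moreover have "W \<subseteq> fv.span (e ` V)"
  proof
    fix w assume w: "w \<in> W"
    have "w = (\<Sum>v\<in>V. (\<lambda>x. w v * e v x))"
    proof
      fix y
      have "(\<Sum>v\<in>V. (\<lambda>x. w v * e v x)) y = (if y \<in> V then w y else 0)"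
        using fin by (simp add: sum_fun_apply e_def if_distrib cong: if_cong)
      then show "w y = (\<Sum>v\<in>V. (\<lambda>x. w v * e v x)) y" using sup[OF w] by auto
    qed
    also have "\<dots> \<in> fv.span (e ` V)"
      by (intro fv.span_sum fv.span_scale fv.span_base) auto
    finally show "w \<in> fv.span (e ` V)" .
  qed
  ultimately have "card W \<le> card (e ` V)" using fv.independent_span_bound[of "e ` V" W] fin by auto
  also have "\<dots> \<le> card V" by (rule card_image_le[OF fin])
  finally show ?thesis .
qed

text \<open>vdim is an honest maximum when the vectors are supported on a finite set.\<close>
lemma vdim_ge:
  fixes U :: "('b \<Rightarrow> 'a::field) set"
  assumes fin: "finite V" and sup: "\<And>w v. w \<in> U \<Longrightarrow> v \<notin> V \<Longrightarrow> w v = 0"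
    and W0: "W0 \<subseteq> U" "lin_indep W0"
  shows "card W0 \<le> vdim U"
proof -
  let ?S = "{card W | W. W \<subseteq> U \<and> lin_indep W}"
  have "?S \<subseteq> {..card V}"
    using lin_indep_card_bound[OF fin] sup by fastforce
  then have "finite ?S" by (rule finite_subset) simp
  moreover have "card W0 \<in> ?S" using W0 by blast
  ultimately show ?thesis unfolding vdim_def by (rule Max_ge)
qed

definition unit_vec :: "'b \<Rightarrow> 'b \<Rightarrow> 'a::field" where
  "unit_vec v = (\<lambda>x. if x = v then 1 else 0)"

lemma inj_unit_vec: "inj (unit_vec :: 'b \<Rightarrow> 'b \<Rightarrow> 'a::field)"
proof (rule injI)
  fix x y :: 'b assume "(unit_vec x :: 'b \<Rightarrow> 'a) = unit_vec y"
  then have "(unit_vec x x :: 'a) = unit_vec y x" by simp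
  then show "x = y" by (simp add: unit_vec_def split: if_splits)
qed

lemma unit_vectors_lin_indep:
  assumes fin: "finite A"
  shows "lin_indep ((unit_vec :: 'b \<Rightarrow> 'b \<Rightarrow> 'a::field) ` A)"
  unfolding lin_indep_def
proof (intro conjI allI impI ballI)
  show "finite ((unit_vec :: 'b \<Rightarrow> 'b \<Rightarrow> 'a) ` A)" using fin by simp
next
  fix u :: "('b \<Rightarrow> 'a) \<Rightarrow> 'a" and w :: "'b \<Rightarrow> 'a"
  assume s: "\<forall>x. (\<Sum>w\<in>unit_vec ` A. u w * w x) = 0" and w: "w \<in> unit_vec ` A"
  then obtain v where v: "v \<in> A" and wv: "w = unit_vec v" by blast
  have inj: "inj_on (unit_vec :: 'b \<Rightarrow> 'b \<Rightarrow> 'a) A" using inj_unit_vec by (rule inj_on_subset) simp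
  have "(\<Sum>w\<in>unit_vec ` A. u w * w v) = (\<Sum>v'\<in>A. u (unit_vec v') * unit_vec v' v)"
    using sum.reindex[OF inj, of "\<lambda>w. u w * w v"] by (simp add: comp_def)
  also have "\<dots> = (\<Sum>v'\<in>A. if v' = v then u (unit_vec v') else 0)"
    by (intro sum.cong) (auto simp: unit_vec_def)
  also have "\<dots> = u (unit_vec v)" using fin v by simp
  finally show "u w = 0" using s wv by simp
qed

lemma card_le_tangent_dim:
  fixes I :: "'a::field cpoly set"
  assumes fin: "finite V" and Vs: "Vs \<subseteq> V"
    and flat: "\<And>f v. f \<in> I \<Longrightarrow> v \<in> Vs \<Longrightarrow> Poly_Mapping.lookup f (Poly_Mapping.single v 1) = 0"
  shows "card Vs \<le> vdim (tangent_space V I)"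
proof -
  have finVs: "finite Vs" using fin Vs by (rule finite_subset[rotated])
  have tangent: "unit_vec ` Vs \<subseteq> tangent_space V I"
  proof
    fix w :: "monom \<times> monom \<Rightarrow> 'a" assume "w \<in> unit_vec ` Vs"
    then obtain v where v: "v \<in> Vs" and w: "w = unit_vec v" by blast
    have vV: "v \<in> V" using v Vs by blast
    have "lin_part V f w = Poly_Mapping.lookup f (Poly_Mapping.single v 1)" for f
      using fin vV unfolding lin_part_def w unit_vec_def by (simp add: if_distrib cong: if_cong)
    then show "w \<in> tangent_space V I"
      using flat v vV unfolding tangent_space_def w unit_vec_def by auto
  qed
  have "card ((unit_vec :: _ \<Rightarrow> _ \<Rightarrow> 'a) ` Vs) \<le> vdim (tangent_space V I)"
    by (rule vdim_ge[OF fin _ tangent unit_vectors_lin_indep[OF finVs]]) (auto simp: tangent_space_def)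
  moreover have "card ((unit_vec :: _ \<Rightarrow> _ \<Rightarrow> 'a) ` Vs) = card Vs"
    using inj_unit_vec by (rule card_image[OF inj_on_subset]) simp
  ultimately show ?thesis by simp
qed

theorem mainTheorem14:
  fixes n d :: nat and le :: "monom \<Rightarrow> monom \<Rightarrow> bool" and J :: "monom set"
  assumes K: "alg_closed_field TYPE('a::field_char_0)"
    and "d \<ge> 1"
    and "monomorder n le"
    and "hilb_segment n le J d"
  shows "card (mingens J) * card {b\<in>terms_deg n d - J. xvar 1 + b \<in> J}
           \<le> stratum_ed TYPE('a) n le J d"
proof -
  have mi: "monomial_ideal n J" and sa: "saturated n J" and bo: "borel n J"
    and hp: "hilb_poly_const n J d"
    using assms(4) by (auto simp: hilb_segment_def)
  define B where "B = {b\<in>terms_deg n d - J. xvar 1 + b \<in> J}"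
  define Vs where "Vs = map_prod (lift_to_deg d) id ` (mingens J \<times> B)"
  have "card Vs = card (mingens J) * card B"
    unfolding Vs_def
    by (simp add: card_image map_prod_inj_on inj_on_lift_to_deg[OF mi bo sa] card_cartesian_product)
  moreover have "Vs \<subseteq> stratum_vars n le J d"
    using lifted_pairs_stratum_vars[OF assms(3,4)] by (auto simp: Vs_def B_def)
  moreover have "flat_along Vs g" if "g \<in> (stratum_gens n le J d :: 'a cpoly set)" for g
  proof (rule stratum_gens_flat[OF _ that])
    fix a a' b assume "(a, b) \<in> Vs" "a' \<in> mingens (trunc_ideal J d)" "a' \<noteq> a"
    then show "(a' - a) + b \<in> trunc_ideal J d"
      using lcm_cofactor_in_trunc[OF mi bo sa hp] by (auto simp: Vs_def B_def)
  qed
  then have "flat_along Vs f" if "f \<in> ideal_gen (stratum_gens n le J d :: 'a cpoly set)" for f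
    using flat_along_ideal_gen that by blast
  ultimately show ?thesis
    using card_le_tangent_dim[OF finite_stratum_vars[OF assms(4)]]
    unfolding B_def stratum_ed_def flat_along_def by metis
qed

end
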